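(* Consider one time step $t^n\to t^{n+1}=t^n+\Delta t$ of the fully discrete semi-implicit discontinuous Galerkin scheme described in the context (periodic boundary conditions), starting from $\vec U_h^n=(\rho_h^n,\vec m_h^n,E_h^n)\in M_h^k\times\mathbf X_h^k\times M_h^k$ and producing $\vec U_h^{n+1}=(\rho_h^{n+1},\vec m_h^{n+1},E_h^{n+1})$. Assume that the intermediate DG solution $\vec U_h^{\mathrm P}$ satisfies $\vec U_h^{\mathrm P}(\vec x_q)\in G$ for all $\vec x_q\in S_h$. Then the scheme conserves density, momentum and total energy: $$(\rho_h^{n},1)=(\rho_h^{n+1},1),\qquad (\vec m_h^{n},\vec 1)=(\vec m_h^{n+1},\vec 1),\qquad (E_h^{n},1)=(E_h^{n+1},1).$$
   Context: Setting. The compressible Navier--Stokes system with conserved variables $\vec U=(\rho,\vec m,E)$, velocity $\vec u=\vec m/\rho$, internal energy $e$ with $E=\rho e+\frac{\|\vec m\|^2}{2\rho}$, ideal gas pressure $p=(\gamma-1)\rho e$ ($\gamma>1$), Reynolds number $\mathrm{Re}>0$, heat parameter $\lambda>0$, strain $\varepsilon(\vec u)=\frac12(\nabla\vec u+\nabla\vec u^T)$. The admissible set is $G=\{(\rho,\vec m,E):\rho>0,\ E-\frac{\|\vec m\|^2}{2\rho}>0\}$ and, for a small $\epsilon>0$, $G^\epsilon=\{(\rho,\vec m,E):\rho\ge\epsilon,\ E-\frac{\|\vec m\|^2}{2\rho}\ge\epsilon\}$. The domain $\Omega\subset\mathbb R^2$ is a rectangle with periodic boundary conditions, partitioned uniformly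 into square cells $K$ (set $\mathcal E_h$) of diameter $h$; $\Gamma_h$ denotes the set of all faces (periodic faces treated as interior). For each face $e$ shared by $K_{i^-},K_{i^+}$ ($i^-<i^+$), $\vec n_e$ points from $K_{i^-}$ to $K_{i^+}$, $\{v\}=\frac12(v|_{K_{i^-}}+v|_{K_{i^+}})$, $[v]=v|_{K_{i^-}}-v|_{K_{i^+}}$. For $k\ge1$, $M_h^k$ (resp. $\mathbf X_h^k$) is the space of scalar (resp. $\mathbb R^2$-valued) functions whose restriction to each cell lies in $\mathbb Q^k$ (polynomials of degree $\le k$ in each variable). $(\cdot,\cdot)$ denotes the $L^2(\Omega)$ inner product evaluated cellwise by the tensor-product $(k+1)$-point Gauss quadrature, and $\langle\cdot,\cdot\rangle$ the one evaluated by the tensor-product $(k+1)$-point Gauss--Lobatto quadrature; all volume and face integrals in the forms below are evaluated by Gauss--Lobatto quadrature. $S_h$ is the union over cells $K$ of the Gauss quadrature points used in the hyperbolic step (volume and face points) together with auxiliary points formed by tensor products of $(k+1)$-point Gauss and $L$-point Gauss--Lobatto points ($2L-3\ge k$) in each direction. Zhang--Shu limiter on a cell $K$ with point set $S_K$ (applied when the cell average $\overline{\vec U}_K\in G^\epsilon$): replace $\rho_K$ by $\hat\rho_K=\theta_\rho(\rho_K-\bar\rho_K)+\bar\rho_K$, $\theta_\rho=\min\{1,\frac{\bar\rho_K-\epsilon}{\bar\rho_K-\min_{S_K}\rho_K}\}$, then replace $\hat{\vec U}_K=(\hat\rho_K,\vec m_K,E_K)$ by $\theta_e(\hat{\vec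 U}_K-\overline{\vec U}_K)+\overline{\vec U}_K$ with $\theta_e=\min\{1,\frac{\overline{\rho e}_K-\epsilon}{\overline{\rho e}_K-\min_{S_K}\rho e_K}\}$, where $\overline{\rho e}_K=\bar E_K-\frac{\|\bar{\vec m}_K\|^2}{2\bar\rho_K}$ and $\rho e_K=E_K-\frac{\|\vec m_K\|^2}{2\hat\rho_K}$ pointwise. Hyperbolic step (H) over time $\Delta t/2$ (possibly in several substeps whose sizes sum to $\Delta t/2$): the semi-discrete DG method $\frac{d}{dt}(\vec U_h,\varPsi_h)_K=(\vec F^a(\vec U_h),\nabla\varPsi_h)_K-\int_{\partial K}\widehat{\vec F^a\cdot\vec n_K}\,\varPsi_h$ for all $\varPsi_h\in\mathbb Q^k(K)$, with Euler flux $\vec F^a=(\rho\vec u,\rho\vec u\otimes\vec u+p\mathbf I,(E+p)\vec u)$ and local Lax--Friedrichs flux $\widehat{\vec F^a\cdot\vec n_K}=\frac12(\vec F^a(\vec U^-)+\vec F^a(\vec U^+))\cdot\vec n_K-\frac{\alpha_e}{2}(\vec U^+-\vec U^-)$ ($\alpha_e$ the maximal wave speed on face $e$), discretized in time by the third-order SSP Runge--Kutta method $\vec U^{(1)}=\vec U^n+\tau L(\vec U^n)$, $\vec U^{(2)}=\frac34\vec U^n+\frac14(\vec U^{(1)}+\tau L(\vec U^{(1)}))$, $\vec U^{\text{new}}=\frac13\vec U^n+\frac23(\vec U^{(2)}+\tau L(\vec U^{(2)}))$, with the Zhang--Shu limiter on $S_h$ after each stage. One time step: (1) from $\vec U_h^n$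 compute $\vec U_h^{\mathrm H}$ by step (H). (2) Apply the Zhang--Shu limiter at the Gauss--Lobatto points; compute $(\vec u_h^{\mathrm H},e_h^{\mathrm H})\in\mathbf X_h^k\times M_h^k$ by $\langle\vec m_h^{\mathrm H},\vec\theta_h\rangle=\langle\rho_h^{\mathrm H}\vec u_h^{\mathrm H},\vec\theta_h\rangle$ and $\langle E_h^{\mathrm H},\chi_h\rangle=\langle\rho_h^{\mathrm H}e_h^{\mathrm H},\chi_h\rangle+\langle\frac{\vec m_h^{\mathrm H}}{2\rho_h^{\mathrm H}},\vec m_h^{\mathrm H}\chi_h\rangle$ for all $\vec\theta_h,\chi_h$. (3) With parameters $\vartheta\in(0,1]$, $\sigma\ge0$, $\tilde\sigma>0$, set $\rho_h^{\mathrm P}=\rho_h^{\mathrm H}$, find $\vec u_h^*\in\mathbf X_h^k$ with $\langle\rho_h^{\mathrm P}\vec u_h^*,\vec\theta_h\rangle+\frac{\Delta t}{2\mathrm{Re}}a_\varepsilon(\vec u_h^*,\vec\theta_h)+\frac{\Delta t}{3\mathrm{Re}}a_\lambda(\vec u_h^*,\vec\theta_h)=\langle\rho_h^{\mathrm H}\vec u_h^{\mathrm H},\vec\theta_h\rangle$ for all $\vec\theta_h\in\mathbf X_h^k$, set $\vec u_h^{\mathrm P}=2\vec u_h^*-\vec u_h^{\mathrm H}$; then find $e_h^*\in M_h^k$ with $\langle\rho_h^{\mathrm P}e_h^*,\chi_h\rangle+\frac{\vartheta\Delta t\lambda}{\mathrm{Re}}a_{\mathcal D}(e_h^*,\chi_h)=\langle\rho_h^{\mathrm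 H}e_h^{\mathrm H},\chi_h\rangle+\frac{\vartheta\Delta t}{\mathrm{Re}}b_\varepsilon(\vec u_h^*,\chi_h)+\frac{2\vartheta\Delta t}{3\mathrm{Re}}b_\lambda(\vec u_h^*,\chi_h)$ for all $\chi_h\in M_h^k$, and set $e_h^{\mathrm P}=\frac1\vartheta e_h^*+(1-\frac1\vartheta)e_h^{\mathrm H}$. Here $a_\varepsilon(\vec u,\vec\theta)=2\sum_K\int_K\varepsilon(\vec u):\varepsilon(\vec\theta)-2\sum_{e\in\Gamma_h}\int_e\{\varepsilon(\vec u)\vec n_e\}\cdot[\vec\theta]+2\sum_{e\in\Gamma_h}\int_e\{\varepsilon(\vec\theta)\vec n_e\}\cdot[\vec u]+\frac\sigma h\sum_{e\in\Gamma_h}\int_e[\vec u]\cdot[\vec\theta]$, $a_\lambda(\vec u,\vec\theta)=-\sum_K\int_K(\nabla\!\cdot\!\vec u)(\nabla\!\cdot\!\vec\theta)+\sum_{e\in\Gamma_h}\int_e\{\nabla\!\cdot\!\vec u\}[\vec\theta\cdot\vec n_e]-\sum_{e\in\Gamma_h}\int_e\{\nabla\!\cdot\!\vec\theta\}[\vec u\cdot\vec n_e]$, $a_{\mathcal D}(e,\chi)=\sum_K\int_K\nabla e\cdot\nabla\chi-\sum_{e'\in\Gamma_h}\int_{e'}\{\nabla e\cdot\vec n_{e'}\}[\chi]+\frac{\tilde\sigma}h\sum_{e'\in\Gamma_h}\int_{e'}[e][\chi]$, $b_\varepsilon(\vec u,\chi)=2\sum_K\int_K\varepsilon(\vec u):\varepsilon(\vec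 u)\chi+\frac\sigma h\sum_{e\in\Gamma_h}\int_e[\vec u]\cdot[\vec u]\{\chi\}$, $b_\lambda(\vec u,\chi)=-\sum_K\int_K(\nabla\!\cdot\!\vec u)^2\chi$. (4) Compute $(\vec m_h^{\mathrm P},E_h^{\mathrm P})$ by $\langle\vec m_h^{\mathrm P},\vec\theta_h\rangle=\langle\rho_h^{\mathrm P}\vec u_h^{\mathrm P},\vec\theta_h\rangle$, $\langle E_h^{\mathrm P},\chi_h\rangle=\langle\rho_h^{\mathrm P}e_h^{\mathrm P},\chi_h\rangle+\langle\frac{\vec m_h^{\mathrm P}}{2\rho_h^{\mathrm P}},\vec m_h^{\mathrm P}\chi_h\rangle$; if some cell average lies outside $G^\epsilon$, the total energy on each cell $K_i$ of an index set $T$ is shifted by a constant, $E_i\mapsto E_i-\bar E_i+\bar E_i^*$, where $(\bar E_i^* )_{i\in T}$ minimizes $\sum_{i\in T}|\bar E_i^*-\bar E_i|^2$ subject to $\sum_{i\in T}\bar E_i^*|K_i|=\sum_{i\in T}\bar E_i|K_i|$ and $(\bar\rho_i,\bar{\vec m}_i,\bar E_i^* )\in G^\epsilon$; then the Zhang--Shu limiter is applied on $S_h$; the result is $\vec U_h^{\mathrm P}$. (5) From $\vec U_h^{\mathrm P}$ compute $\vec U_h^{n+1}$ by step (H). All steps are assumed well defined (linear systems uniquely solvable, densities positive where divided by). *)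

theory Defs
  imports "HOL-Analysis.Analysis"
begin

(* A local polynomial in Q^k on the reference square [-1,1]^2: coefficients c p q of xi^p eta^q
   (only p,q <= k are used). *)
type_synonym poly2 = "nat \<Rightarrow> nat \<Rightarrow> real"
type_synonym cell = "nat \<times> nat"
type_synonym sfun = "cell \<Rightarrow> poly2"
(* vector-valued broken polynomial: component index |-> scalar one.
   Conserved variables: component 0 = rho, 1,2 = m, 3 = E;  velocities: components 0,1. *)
type_synonym vfun = "nat \<Rightarrow> sfun"
type_synonym state = "nat \<Rightarrow> real"

record prm =
  kdeg :: nat
  nx :: nat
  ny :: nat
  hdiam :: real
  gam :: real
  Rey :: real
  lamb :: real
  epsl :: real
  dt :: real
  vth :: real
  sig :: real
  sigt :: real
  gx :: "real list"
  gw :: "real list"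
  lx :: "real list"
  lw :: "real list"
  ax :: "real list"
  aw :: "real list"

definition quad_nodes :: "nat \<Rightarrow> real list \<Rightarrow> real list \<Rightarrow> bool" where
  "quad_nodes n xs ws \<longleftrightarrow> length xs = n \<and> length ws = n \<and> sorted_wrt (<) xs \<and> set xs \<subseteq> {-1..1}"

(* n-point Gauss rule: n nodes, exact for all polynomials of degree <= 2n-1 (unique such rule) *)
definition gauss_rule :: "nat \<Rightarrow> real list \<Rightarrow> real list \<Rightarrow> bool" where
  "gauss_rule n xs ws \<longleftrightarrow> quad_nodes n xs ws \<and>
     (\<forall>d\<le>2*n-1. (\<Sum>i<n. ws!i * (xs!i)^d) = integral {-1..1} (\<lambda>x::real. x^d))"

definition gauss_lobatto_rule :: "nat \<Rightarrow> real list \<Rightarrow> real list \<Rightarrow> bool" where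
  "gauss_lobatto_rule n xs ws \<longleftrightarrow> n \<ge> 2 \<and> quad_nodes n xs ws \<and> xs!0 = -1 \<and> xs!(n-1) = 1 \<and>
     (\<forall>d\<le>2*n-3. (\<Sum>i<n. ws!i * (xs!i)^d) = integral {-1..1} (\<lambda>x::real. x^d))"

definition valid_params :: "prm \<Rightarrow> bool" where
  "valid_params P \<longleftrightarrow> kdeg P \<ge> 1 \<and> nx P \<ge> 1 \<and> ny P \<ge> 1 \<and> hdiam P > 0 \<and> gam P > 1 \<and>
     Rey P > 0 \<and> lamb P > 0 \<and> epsl P > 0 \<and> dt P > 0 \<and> 0 < vth P \<and> vth P \<le> 1 \<and>
     sig P \<ge> 0 \<and> sigt P > 0 \<and>
     gauss_rule (kdeg P + 1) (gx P) (gw P) \<and>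
     gauss_lobatto_rule (kdeg P + 1) (lx P) (lw P) \<and>
     gauss_lobatto_rule (length (ax P)) (ax P) (aw P) \<and> 2 * length (ax P) \<ge> kdeg P + 3"

(* side length of the square cells (diameter h = sqrt 2 * side) *)
definition side :: "prm \<Rightarrow> real" where "side P = hdiam P / sqrt 2"

definition cells :: "prm \<Rightarrow> cell set" where "cells P = {0..<nx P} \<times> {0..<ny P}"

(* periodic neighbour in positive / negative direction d (d=0: x, d=1: y) *)
definition nb :: "prm \<Rightarrow> nat \<Rightarrow> cell \<Rightarrow> cell" where
  "nb P d K = (case K of (i,j) \<Rightarrow>
     if d = 0 then ((i+1) mod nx P, j) else (i, (j+1) mod ny P))"
definition nbm :: "prm \<Rightarrow> nat \<Rightarrow> cell \<Rightarrow> cell" where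
  "nbm P d K = (case K of (i,j) \<Rightarrow>
     if d = 0 then ((i + nx P - 1) mod nx P, j) else (i, (j + ny P - 1) mod ny P))"

(* reference point on the face x_d = sg (sg = 1 or -1) with tangential parameter s *)
definition fpt :: "nat \<Rightarrow> real \<Rightarrow> real \<Rightarrow> real \<times> real" where
  "fpt d sg s = (if d = 0 then (sg, s) else (s, sg))"

definition ev :: "nat \<Rightarrow> poly2 \<Rightarrow> real \<Rightarrow> real \<Rightarrow> real" where
  "ev k c \<xi> \<eta> = (\<Sum>p\<le>k. \<Sum>q\<le>k. c p q * \<xi>^p * \<eta>^q)"
definition evx :: "nat \<Rightarrow> poly2 \<Rightarrow> real \<Rightarrow> real \<Rightarrow> real" where
  "evx k c \<xi> \<eta> = (\<Sum>p\<le>k. \<Sum>q\<le>k. c p q * real p * \<xi>^(p-1) * \<eta>^q)"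
definition evy :: "nat \<Rightarrow> poly2 \<Rightarrow> real \<Rightarrow> real \<Rightarrow> real" where
  "evy k c \<xi> \<eta> = (\<Sum>p\<le>k. \<Sum>q\<le>k. c p q * \<xi>^p * real q * \<eta>^(q-1))"

definition dref :: "prm \<Rightarrow> nat \<Rightarrow> poly2 \<Rightarrow> real \<Rightarrow> real \<Rightarrow> real" where
  "dref P d c \<xi> \<eta> = 2 / side P * (if d = 0 then evx (kdeg P) c \<xi> \<eta> else evy (kdeg P) c \<xi> \<eta>)"

definition pv :: "prm \<Rightarrow> sfun \<Rightarrow> cell \<Rightarrow> real \<Rightarrow> real \<Rightarrow> real" where
  "pv P v K \<xi> \<eta> = ev (kdeg P) (v K) \<xi> \<eta>"
definition pd :: "prm \<Rightarrow> nat \<Rightarrow> sfun \<Rightarrow> cell \<Rightarrow> real \<Rightarrow> real \<Rightarrow> real" where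
  "pd P d v K \<xi> \<eta> = dref P d (v K) \<xi> \<eta>"

definition st :: "prm \<Rightarrow> vfun \<Rightarrow> cell \<Rightarrow> real \<Rightarrow> real \<Rightarrow> state" where
  "st P U K \<xi> \<eta> = (\<lambda>c. pv P (U c) K \<xi> \<eta>)"

definition lc :: "real \<Rightarrow> vfun \<Rightarrow> real \<Rightarrow> vfun \<Rightarrow> vfun" where
  "lc a U b V = (\<lambda>c K p q. a * U c K p q + b * V c K p q)"
definition lcs :: "real \<Rightarrow> sfun \<Rightarrow> real \<Rightarrow> sfun \<Rightarrow> sfun" where
  "lcs a v b w = (\<lambda>K p q. a * v K p q + b * w K p q)"

definition qsum1 :: "real list \<Rightarrow> real list \<Rightarrow> (real \<Rightarrow> real) \<Rightarrow> real" where
  "qsum1 xs ws g = (\<Sum>j<length xs. ws!j * g (xs!j))"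
definition qsum2 :: "real list \<Rightarrow> real list \<Rightarrow> (real \<Rightarrow> real \<Rightarrow> real) \<Rightarrow> real" where
  "qsum2 xs ws f = (\<Sum>i<length xs. \<Sum>j<length xs. ws!i * ws!j * f (xs!i) (xs!j))"

definition gcell :: "prm \<Rightarrow> (real \<Rightarrow> real \<Rightarrow> real) \<Rightarrow> real" where
  "gcell P f = (side P)^2 / 4 * qsum2 (gx P) (gw P) f"

(* (v,1) with Gauss quadrature over Omega *)
definition gtotal :: "prm \<Rightarrow> sfun \<Rightarrow> real" where
  "gtotal P v = (\<Sum>K\<in>cells P. gcell P (pv P v K))"

definition avg :: "prm \<Rightarrow> sfun \<Rightarrow> cell \<Rightarrow> real" where
  "avg P v K = gcell P (pv P v K) / (side P)^2"

definition lvol :: "prm \<Rightarrow> (cell \<Rightarrow> real \<Rightarrow> real \<Rightarrow> real) \<Rightarrow> real" where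
  "lvol P F = (\<Sum>K\<in>cells P. (side P)^2 / 4 * qsum2 (lx P) (lw P) (F K))"

(* Gauss-Lobatto quadrature over the faces of Gamma_h orthogonal to e_d; each face is the
   positive-d face of exactly one cell K, with n_e = e_d pointing from K to nb d K *)
definition lface :: "prm \<Rightarrow> nat \<Rightarrow> (cell \<Rightarrow> real \<Rightarrow> real) \<Rightarrow> real" where
  "lface P d G = (\<Sum>K\<in>cells P. side P / 2 * qsum1 (lx P) (lw P) (G K))"

definition trm :: "(cell \<Rightarrow> real \<Rightarrow> real \<Rightarrow> real) \<Rightarrow> nat \<Rightarrow> cell \<Rightarrow> real \<Rightarrow> real" where
  "trm Q d K s = case_prod (Q K) (fpt d 1 s)"
definition trp :: "prm \<Rightarrow> (cell \<Rightarrow> real \<Rightarrow> real \<Rightarrow> real) \<Rightarrow> nat \<Rightarrow> cell \<Rightarrow> real \<Rightarrow> real" where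
  "trp P Q d K s = case_prod (Q (nb P d K)) (fpt d (-1) s)"
definition fjump :: "prm \<Rightarrow> nat \<Rightarrow> (cell \<Rightarrow> real \<Rightarrow> real \<Rightarrow> real) \<Rightarrow> cell \<Rightarrow> real \<Rightarrow> real" where
  "fjump P d Q K s = trm Q d K s - trp P Q d K s"
definition favg :: "prm \<Rightarrow> nat \<Rightarrow> (cell \<Rightarrow> real \<Rightarrow> real \<Rightarrow> real) \<Rightarrow> cell \<Rightarrow> real \<Rightarrow> real" where
  "favg P d Q K s = (trm Q d K s + trp P Q d K s) / 2"

definition strain :: "prm \<Rightarrow> vfun \<Rightarrow> nat \<Rightarrow> nat \<Rightarrow> cell \<Rightarrow> real \<Rightarrow> real \<Rightarrow> real" where
  "strain P u i j = (\<lambda>K \<xi> \<eta>. (pd P j (u i) K \<xi> \<eta> + pd P i (u j) K \<xi> \<eta>) / 2)"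
definition divg :: "prm \<Rightarrow> vfun \<Rightarrow> cell \<Rightarrow> real \<Rightarrow> real \<Rightarrow> real" where
  "divg P u = (\<lambda>K \<xi> \<eta>. pd P 0 (u 0) K \<xi> \<eta> + pd P 1 (u 1) K \<xi> \<eta>)"

definition a_eps :: "prm \<Rightarrow> vfun \<Rightarrow> vfun \<Rightarrow> real" where
  "a_eps P u th =
     2 * lvol P (\<lambda>K \<xi> \<eta>. \<Sum>i<2. \<Sum>j<2. strain P u i j K \<xi> \<eta> * strain P th i j K \<xi> \<eta>)
   - 2 * (\<Sum>d<2. lface P d (\<lambda>K s. \<Sum>i<2. favg P d (strain P u i d) K s * fjump P d (pv P (th i)) K s))
   + 2 * (\<Sum>d<2. lface P d (\<lambda>K s. \<Sum>i<2. favg P d (strain P th i d) K s * fjump P d (pv P (u i)) K s))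
   + sig P / hdiam P * (\<Sum>d<2. lface P d (\<lambda>K s. \<Sum>i<2. fjump P d (pv P (u i)) K s * fjump P d (pv P (th i)) K s))"

definition a_lam :: "prm \<Rightarrow> vfun \<Rightarrow> vfun \<Rightarrow> real" where
  "a_lam P u th =
     - lvol P (\<lambda>K \<xi> \<eta>. divg P u K \<xi> \<eta> * divg P th K \<xi> \<eta>)
   + (\<Sum>d<2. lface P d (\<lambda>K s. favg P d (divg P u) K s * fjump P d (pv P (th d)) K s))
   - (\<Sum>d<2. lface P d (\<lambda>K s. favg P d (divg P th) K s * fjump P d (pv P (u d)) K s))"

definition a_D :: "prm \<Rightarrow> sfun \<Rightarrow> sfun \<Rightarrow> real" where
  "a_D P e ch =
     lvol P (\<lambda>K \<xi> \<eta>. \<Sum>i<2. pd P i e K \<xi> \<eta> * pd P i ch K \<xi> \<eta>)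
   - (\<Sum>d<2. lface P d (\<lambda>K s. favg P d (pd P d e) K s * fjump P d (pv P ch) K s))
   + sigt P / hdiam P * (\<Sum>d<2. lface P d (\<lambda>K s. fjump P d (pv P e) K s * fjump P d (pv P ch) K s))"

definition b_eps :: "prm \<Rightarrow> vfun \<Rightarrow> sfun \<Rightarrow> real" where
  "b_eps P u ch =
     2 * lvol P (\<lambda>K \<xi> \<eta>. (\<Sum>i<2. \<Sum>j<2. strain P u i j K \<xi> \<eta> * strain P u i j K \<xi> \<eta>) * pv P ch K \<xi> \<eta>)
   + sig P / hdiam P * (\<Sum>d<2. lface P d (\<lambda>K s.
        (\<Sum>i<2. fjump P d (pv P (u i)) K s * fjump P d (pv P (u i)) K s) * favg P d (pv P ch) K s))"

definition b_lam :: "prm \<Rightarrow> vfun \<Rightarrow> sfun \<Rightarrow> real" where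
  "b_lam P u ch = - lvol P (\<lambda>K \<xi> \<eta>. (divg P u K \<xi> \<eta>)^2 * pv P ch K \<xi> \<eta>)"

definition inG :: "state \<Rightarrow> bool" where
  "inG w \<longleftrightarrow> w 0 > 0 \<and> w 3 - ((w 1)^2 + (w 2)^2) / (2 * w 0) > 0"
definition inGeps :: "prm \<Rightarrow> state \<Rightarrow> bool" where
  "inGeps P w \<longleftrightarrow> w 0 \<ge> epsl P \<and> w 3 - ((w 1)^2 + (w 2)^2) / (2 * w 0) \<ge> epsl P"

definition S_pts :: "prm \<Rightarrow> (real \<times> real) set" where
  "S_pts P = set (gx P) \<times> set (gx P) \<union> {-1, 1} \<times> set (gx P) \<union> set (gx P) \<times> {-1, 1}
            \<union> set (gx P) \<times> set (ax P) \<union> set (ax P) \<times> set (gx P)"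

definition GL_pts :: "prm \<Rightarrow> (real \<times> real) set" where
  "GL_pts P = set (lx P) \<times> set (lx P)"

definition zs_cell :: "prm \<Rightarrow> (real \<times> real) set \<Rightarrow> vfun \<Rightarrow> cell \<Rightarrow> nat \<Rightarrow> poly2" where
  "zs_cell P S U K = (let
      k = kdeg P;
      ub = (\<lambda>c. avg P (U c) K);
      rhob = ub 0;
      tr = min 1 ((rhob - epsl P) / (rhob - Min ((\<lambda>(\<xi>,\<eta>). ev k (U 0 K) \<xi> \<eta>) ` S)));
      rhohat = (\<lambda>p q. tr * U 0 K p q + (if p = 0 \<and> q = 0 then (1 - tr) * rhob else 0));
      Uhat = (\<lambda>c. if c = 0 then rhohat else U c K);
      reb = ub 3 - ((ub 1)^2 + (ub 2)^2) / (2 * rhob);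
      re = (\<lambda>(\<xi>,\<eta>). ev k (Uhat 3) \<xi> \<eta> - ((ev k (Uhat 1) \<xi> \<eta>)^2 + (ev k (Uhat 2) \<xi> \<eta>)^2)
                                         / (2 * ev k rhohat \<xi> \<eta>));
      te = min 1 ((reb - epsl P) / (reb - Min (re ` S)))
    in if inGeps P ub
       then (\<lambda>c p q. te * Uhat c p q + (if p = 0 \<and> q = 0 then (1 - te) * ub c else 0))
       else (\<lambda>c. U c K))"

definition zs :: "prm \<Rightarrow> (real \<times> real) set \<Rightarrow> vfun \<Rightarrow> vfun" where
  "zs P S U = (\<lambda>c K. zs_cell P S U K c)"

definition pres :: "prm \<Rightarrow> state \<Rightarrow> real" where
  "pres P w = (gam P - 1) * (w 3 - ((w 1)^2 + (w 2)^2) / (2 * w 0))"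

definition eflux :: "prm \<Rightarrow> state \<Rightarrow> nat \<Rightarrow> nat \<Rightarrow> real" where
  "eflux P w d c = (let ud = w (Suc d) / w 0; p = pres P w in
     if c = 0 then w (Suc d)
     else if c = 1 then w 1 * ud + (if d = 0 then p else 0)
     else if c = 2 then w 2 * ud + (if d = 1 then p else 0)
     else (w 3 + p) * ud)"

definition wspeed :: "prm \<Rightarrow> state \<Rightarrow> nat \<Rightarrow> real" where
  "wspeed P w d = \<bar>w (Suc d) / w 0\<bar> + sqrt (gam P * pres P w / w 0)"

definition alpha :: "prm \<Rightarrow> vfun \<Rightarrow> nat \<Rightarrow> cell \<Rightarrow> real" where
  "alpha P U d K = Max ((\<lambda>s. max (wspeed P (case_prod (st P U K) (fpt d 1 s)) d)
                                  (wspeed P (case_prod (st P U (nb P d K)) (fpt d (-1) s)) d)) ` set (gx P))"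

(* local Lax-Friedrichs flux, interior state wm, exterior state wp, n_K = sg * e_d *)
definition nflux :: "prm \<Rightarrow> state \<Rightarrow> state \<Rightarrow> real \<Rightarrow> nat \<Rightarrow> real \<Rightarrow> nat \<Rightarrow> real" where
  "nflux P wm wp sg d al c = (eflux P wm d c + eflux P wp d c) / 2 * sg - al / 2 * (wp c - wm c)"

(* V = L(U): the DG spatial operator (mass matrix relation, Gauss quadrature) *)
definition dg_rhs :: "prm \<Rightarrow> vfun \<Rightarrow> vfun \<Rightarrow> bool" where
  "dg_rhs P U V \<longleftrightarrow> (\<forall>K\<in>cells P. \<forall>\<Psi>::poly2. \<forall>c<4.
     gcell P (\<lambda>\<xi> \<eta>. pv P (V c) K \<xi> \<eta> * ev (kdeg P) \<Psi> \<xi> \<eta>) =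
       gcell P (\<lambda>\<xi> \<eta>. \<Sum>d<2. eflux P (st P U K \<xi> \<eta>) d c * dref P d \<Psi> \<xi> \<eta>)
     - (\<Sum>d<2. side P / 2 * qsum1 (gx P) (gw P) (\<lambda>s.
           nflux P (case_prod (st P U K) (fpt d 1 s)) (case_prod (st P U (nb P d K)) (fpt d (-1) s))
                 1 d (alpha P U d K) c * case_prod (ev (kdeg P) \<Psi>) (fpt d 1 s)
         + nflux P (case_prod (st P U K) (fpt d (-1) s)) (case_prod (st P U (nbm P d K)) (fpt d 1 s))
                 (-1) d (alpha P U d (nbm P d K)) c * case_prod (ev (kdeg P) \<Psi>) (fpt d (-1) s))))"

(* one SSP-RK3 step of size tau with the Zhang--Shu limiter on S_h after each stage *)
definition rk_step :: "prm \<Rightarrow> real \<Rightarrow> vfun \<Rightarrow> vfun \<Rightarrow> bool" where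
  "rk_step P \<tau> U U' \<longleftrightarrow> (\<exists>L0 L1 L2 U1 U2.
      dg_rhs P U L0 \<and> U1 = zs P (S_pts P) (lc 1 U \<tau> L0) \<and>
      dg_rhs P U1 L1 \<and> U2 = zs P (S_pts P) (lc (3/4) U (1/4) (lc 1 U1 \<tau> L1)) \<and>
      dg_rhs P U2 L2 \<and> U' = zs P (S_pts P) (lc (1/3) U (2/3) (lc 1 U2 \<tau> L2)))"

fun rk_chain :: "prm \<Rightarrow> real list \<Rightarrow> vfun \<Rightarrow> vfun \<Rightarrow> bool" where
  "rk_chain P [] U U' \<longleftrightarrow> U' = U"
| "rk_chain P (\<tau> # ts) U U' \<longleftrightarrow> (\<exists>V. rk_step P \<tau> U V \<and> rk_chain P ts V U')"

definition hyp_step :: "prm \<Rightarrow> real list \<Rightarrow> vfun \<Rightarrow> vfun \<Rightarrow> bool" where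
  "hyp_step P taus U U' \<longleftrightarrow> (\<forall>\<tau>\<in>set taus. \<tau> > 0) \<and> sum_list taus = dt P / 2 \<and> rk_chain P taus U U'"

definition recover :: "prm \<Rightarrow> vfun \<Rightarrow> vfun \<Rightarrow> sfun \<Rightarrow> bool" where
  "recover P U u e \<longleftrightarrow>
     (\<forall>th::vfun. lvol P (\<lambda>K \<xi> \<eta>. \<Sum>i<2. pv P (U (Suc i)) K \<xi> \<eta> * pv P (th i) K \<xi> \<eta>)
               = lvol P (\<lambda>K \<xi> \<eta>. \<Sum>i<2. pv P (U 0) K \<xi> \<eta> * pv P (u i) K \<xi> \<eta> * pv P (th i) K \<xi> \<eta>)) \<and>
     (\<forall>ch::sfun. lvol P (\<lambda>K \<xi> \<eta>. pv P (U 3) K \<xi> \<eta> * pv P ch K \<xi> \<eta>)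
               = lvol P (\<lambda>K \<xi> \<eta>. pv P (U 0) K \<xi> \<eta> * pv P e K \<xi> \<eta> * pv P ch K \<xi> \<eta>)
               + lvol P (\<lambda>K \<xi> \<eta>. \<Sum>i<2. pv P (U (Suc i)) K \<xi> \<eta> / (2 * pv P (U 0) K \<xi> \<eta>)
                                         * pv P (U (Suc i)) K \<xi> \<eta> * pv P ch K \<xi> \<eta>))"

definition visc_mom :: "prm \<Rightarrow> sfun \<Rightarrow> vfun \<Rightarrow> vfun \<Rightarrow> bool" where
  "visc_mom P rho uH ust \<longleftrightarrow> (\<forall>th::vfun.
      lvol P (\<lambda>K \<xi> \<eta>. \<Sum>i<2. pv P rho K \<xi> \<eta> * pv P (ust i) K \<xi> \<eta> * pv P (th i) K \<xi> \<eta>)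
      + dt P / (2 * Rey P) * a_eps P ust th + dt P / (3 * Rey P) * a_lam P ust th
      = lvol P (\<lambda>K \<xi> \<eta>. \<Sum>i<2. pv P rho K \<xi> \<eta> * pv P (uH i) K \<xi> \<eta> * pv P (th i) K \<xi> \<eta>))"

definition visc_en :: "prm \<Rightarrow> sfun \<Rightarrow> sfun \<Rightarrow> vfun \<Rightarrow> sfun \<Rightarrow> bool" where
  "visc_en P rho eH ust est \<longleftrightarrow> (\<forall>ch::sfun.
      lvol P (\<lambda>K \<xi> \<eta>. pv P rho K \<xi> \<eta> * pv P est K \<xi> \<eta> * pv P ch K \<xi> \<eta>)
      + vth P * dt P * lamb P / Rey P * a_D P est ch
      = lvol P (\<lambda>K \<xi> \<eta>. pv P rho K \<xi> \<eta> * pv P eH K \<xi> \<eta> * pv P ch K \<xi> \<eta>)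
      + vth P * dt P / Rey P * b_eps P ust ch + 2 * vth P * dt P / (3 * Rey P) * b_lam P ust ch)"

definition en_feasible :: "prm \<Rightarrow> vfun \<Rightarrow> cell set \<Rightarrow> (cell \<Rightarrow> real) \<Rightarrow> bool" where
  "en_feasible P U T F \<longleftrightarrow>
     (\<Sum>i\<in>T. F i * (side P)^2) = (\<Sum>i\<in>T. avg P (U 3) i * (side P)^2) \<and>
     (\<forall>i\<in>T. inGeps P (\<lambda>c. if c = 3 then F i else avg P (U c) i))"

definition en_min :: "prm \<Rightarrow> vfun \<Rightarrow> cell set \<Rightarrow> (cell \<Rightarrow> real) \<Rightarrow> bool" where
  "en_min P U T Es \<longleftrightarrow> en_feasible P U T Es \<and>
     (\<forall>F. en_feasible P U T F \<longrightarrow>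
        (\<Sum>i\<in>T. \<bar>Es i - avg P (U 3) i\<bar>^2) \<le> (\<Sum>i\<in>T. \<bar>F i - avg P (U 3) i\<bar>^2))"

definition energy_fix :: "prm \<Rightarrow> vfun \<Rightarrow> vfun \<Rightarrow> bool" where
  "energy_fix P U U' \<longleftrightarrow>
    (if \<forall>K\<in>cells P. inGeps P (\<lambda>c. avg P (U c) K) then U' = U
     else (\<exists>T Es. T \<subseteq> cells P \<and> en_min P U T Es \<and>
             U' = (\<lambda>c K. if c = 3 \<and> K \<in> T
                          then (\<lambda>p q. U 3 K p q + (if p = 0 \<and> q = 0 then Es K - avg P (U 3) K else 0))
                          else U c K)))"

end

theory Submission
  imports Defs "HOL-Computational_Algebra.Polynomial"
begin

(* Every sub-step of the time step preserves the Gauss-quadrature totals of the four conserved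
   variables.  Tested with the constant 1, the DG operator reduces to the numerical fluxes, which
   cancel across every (periodic) face because the Lax-Friedrichs flux is conservative.  The
   Zhang-Shu limiter and the energy correction only change cells by constants chosen so that the
   totals are kept.  In the parabolic step, Gauss and Gauss-Lobatto quadrature agree on Q^k, and at
   the Gauss-Lobatto nodes the weak identity m = rho u holds pointwise because the Gauss-Lobatto mass
   matrix is diagonal.  Testing the momentum equation with constant vectors gives momentum
   conservation; testing it with u^* shows that the kinetic energy lost by u^P = 2 u^* - u^H equals the
   viscous heating that the internal energy equation (tested with 1) gains. *)

section \<open>Local polynomials\<close>

definition const_poly :: "real \<Rightarrow> poly2" where
  "const_poly a = (\<lambda>p q. if p = 0 \<and> q = 0 then a else 0)"

lemma sum_sum_delta:
  assumes "finite A" "finite B" "a \<in> A" "b \<in> B"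
  shows "(\<Sum>i\<in>A. \<Sum>j\<in>B. if i = a \<and> j = b then f i j else 0) = f a b"
proof -
  have "(\<Sum>j\<in>B. if i = a \<and> j = b then f i j else 0) = (if i = a then f i b else 0)" for i
    using assms by (cases "i = a") simp_all
  then show ?thesis using assms by simp
qed

lemma ev_const_poly [simp]: "ev k (const_poly a) x y = a"
  unfolding ev_def const_poly_def
  by (simp add: if_distrib[of "\<lambda>z. z * _"] sum_sum_delta cong: if_cong)

lemma evx_const_poly [simp]: "evx k (const_poly a) x y = 0"
  unfolding evx_def const_poly_def by (simp add: if_distrib[of "\<lambda>z. z * _"] cong: if_cong)

lemma evy_const_poly [simp]: "evy k (const_poly a) x y = 0"
  unfolding evy_def const_poly_def by (simp add: if_distrib[of "\<lambda>z. z * _"] cong: if_cong)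

lemma dref_const_poly [simp]: "dref P d (const_poly a) x y = 0"
  by (simp add: dref_def)

lemma ev_linear: "ev k (\<lambda>p q. a * c p q + b * c' p q) x y = a * ev k c x y + b * ev k c' x y"
  unfolding ev_def by (simp add: sum_distrib_left sum.distrib algebra_simps)

lemma ev_add_const:
  "ev k (\<lambda>p q. t * c p q + (if p = 0 \<and> q = 0 then a else 0)) x y = t * ev k c x y + a"
proof -
  have "ev k (\<lambda>p q. t * c p q + 1 * const_poly a p q) x y = t * ev k c x y + a"
    by (simp only: ev_linear) simp
  then show ?thesis by (simp add: const_poly_def)
qed

lemma pv_eq_ev: "pv P v K = ev (kdeg P) (v K)"
  by (simp add: pv_def fun_eq_iff)

lemma pv_lc: "pv P (lc a U b V c) K x y = a * pv P (U c) K x y + b * pv P (V c) K x y"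
  unfolding pv_def lc_def by (rule ev_linear)

lemma pv_lcs: "pv P (lcs a v b w) K x y = a * pv P v K x y + b * pv P w K x y"
  unfolding pv_def lcs_def by (rule ev_linear)

definition const_sfun :: "real \<Rightarrow> sfun" where
  "const_sfun a = (\<lambda>K. const_poly a)"

lemma pv_const_sfun [simp]: "pv P (const_sfun a) = (\<lambda>K x y. a)"
  by (simp add: pv_def const_sfun_def fun_eq_iff)

lemma pd_const_sfun [simp]: "pd P d (const_sfun a) = (\<lambda>K x y. 0)"
  by (simp add: pd_def const_sfun_def fun_eq_iff)

section \<open>Quadrature\<close>

lemma qsum2_linear:
  "qsum2 xs ws (\<lambda>x y. a * f x y + b * g x y) = a * qsum2 xs ws f + b * qsum2 xs ws g"
  unfolding qsum2_def by (simp add: sum_distrib_left sum.distrib algebra_simps)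

lemma qsum2_sum: "qsum2 xs ws (\<lambda>x y. \<Sum>a\<in>A. f a x y) = (\<Sum>a\<in>A. qsum2 xs ws (f a))"
  unfolding qsum2_def by (simp add: sum_distrib_left sum.swap[of _ A])

lemma qsum2_tensor: "qsum2 xs ws (\<lambda>x y. f x * g y) = qsum1 xs ws f * qsum1 xs ws g"
  unfolding qsum2_def qsum1_def by (simp add: sum_product mult_ac)

lemma qsum2_ev:
  "qsum2 xs ws (ev k c) = (\<Sum>p\<le>k. \<Sum>q\<le>k. c p q * qsum1 xs ws (\<lambda>x. x ^ p) * qsum1 xs ws (\<lambda>y. y ^ q))"
proof -
  have "qsum2 xs ws (\<lambda>x y. c p q * x ^ p * y ^ q) = c p q * qsum1 xs ws (\<lambda>x. x ^ p) * qsum1 xs ws (\<lambda>y. y ^ q)" for p q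
    using qsum2_tensor[of xs ws "\<lambda>x. c p q * x ^ p" "\<lambda>y. y ^ q"]
    by (simp add: qsum1_def sum_distrib_left mult_ac)
  then show ?thesis
    unfolding ev_def by (simp add: qsum2_sum)
qed

lemma qsum2_const: "qsum2 xs ws (\<lambda>x y. a) = a * qsum1 xs ws (\<lambda>x. 1) ^ 2"
  unfolding qsum2_def qsum1_def by (simp add: power2_eq_square sum_product sum_distrib_left mult_ac)

lemma qsum1_sum: "(\<Sum>a\<in>A. qsum1 xs ws (f a)) = qsum1 xs ws (\<lambda>s. \<Sum>a\<in>A. f a s)"
  unfolding qsum1_def by (simp add: sum_distrib_left sum.swap[of _ A])

lemma gauss_moments:
  assumes "valid_params P" "d \<le> kdeg P"
  shows "qsum1 (gx P) (gw P) (\<lambda>x. x ^ d) = integral {-1..1} (\<lambda>x. x ^ d)"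
  using assms unfolding valid_params_def gauss_rule_def quad_nodes_def qsum1_def by auto

lemma lobatto_moments:
  assumes "valid_params P" "d \<le> kdeg P"
  shows "qsum1 (lx P) (lw P) (\<lambda>x. x ^ d) = integral {-1..1} (\<lambda>x. x ^ d)"
  using assms unfolding valid_params_def gauss_lobatto_rule_def quad_nodes_def qsum1_def by auto

lemma side_pos: "valid_params P \<Longrightarrow> side P > 0"
  unfolding valid_params_def side_def by auto

lemma finite_cells [simp]: "finite (cells P)"
  by (simp add: cells_def)

lemma gauss_lobatto_moments_eq:
  "valid_params P \<Longrightarrow> d \<le> kdeg P \<Longrightarrow> qsum1 (gx P) (gw P) (\<lambda>x. x ^ d) = qsum1 (lx P) (lw P) (\<lambda>x. x ^ d)"
  by (simp add: gauss_moments lobatto_moments)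

lemma gtotal_eq_lvol: "valid_params P \<Longrightarrow> gtotal P v = lvol P (pv P v)"
  unfolding gtotal_def lvol_def gcell_def pv_eq_ev qsum2_ev
  by (intro sum.cong refl) (simp add: gauss_lobatto_moments_eq)

lemma gcell_linear: "gcell P (\<lambda>x y. a * f x y + b * g x y) = a * gcell P f + b * gcell P g"
  unfolding gcell_def qsum2_linear by (simp add: algebra_simps)

lemma gcell_zero [simp]: "gcell P (\<lambda>x y. 0) = 0"
  by (simp add: gcell_def qsum2_def)

lemma gcell_const: "valid_params P \<Longrightarrow> gcell P (\<lambda>x y. a) = a * side P ^ 2"
  using gauss_moments[of P 0] unfolding gcell_def qsum2_const by simp

lemma gcell_add_const:
  assumes "valid_params P"
  shows "gcell P (ev (kdeg P) (\<lambda>p q. t * w p q + (if p = 0 \<and> q = 0 then a else 0)))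
       = t * gcell P (ev (kdeg P) w) + a * side P ^ 2"
proof -
  have "ev (kdeg P) (\<lambda>p q. t * w p q + (if p = 0 \<and> q = 0 then a else 0))
      = (\<lambda>x y. t * ev (kdeg P) w x y + a * 1)"
    by (simp add: ev_add_const fun_eq_iff)
  then show ?thesis
    using gcell_linear[of P t "ev (kdeg P) w" a "\<lambda>x y. 1"] gcell_const[OF assms, of 1] by simp
qed

lemma avg_times_area: "valid_params P \<Longrightarrow> avg P v K * side P ^ 2 = gcell P (pv P v K)"
  using side_pos[of P] by (simp add: avg_def)

lemma lvol_linear: "lvol P (\<lambda>K x y. a * F K x y + b * G K x y) = a * lvol P F + b * lvol P G"
  unfolding lvol_def qsum2_def by (simp add: sum_distrib_left sum.distrib algebra_simps)

lemma lvol_scale: "lvol P (\<lambda>K x y. a * F K x y) = a * lvol P F"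
  using lvol_linear[of P a F 0 F] by simp

lemma lvol_add: "lvol P (\<lambda>K x y. F K x y + G K x y) = lvol P F + lvol P G"
  using lvol_linear[of P 1 F 1 G] by simp

lemma lvol_diff: "lvol P (\<lambda>K x y. F K x y - G K x y) = lvol P F - lvol P G"
  using lvol_linear[of P 1 F "-1" G] by simp

lemma lvol_zero [simp]: "lvol P (\<lambda>K x y. 0) = 0"
  by (simp add: lvol_def qsum2_def)

lemma lface_zero [simp]: "lface P d (\<lambda>K s. 0) = 0"
  by (simp add: lface_def qsum1_def)

lemma lvol_cong_nodes:
  assumes "\<And>K i j. K \<in> cells P \<Longrightarrow> i < length (lx P) \<Longrightarrow> j < length (lx P) \<Longrightarrow>
    lw P ! i * lw P ! j * F K (lx P ! i) (lx P ! j) = lw P ! i * lw P ! j * G K (lx P ! i) (lx P ! j)"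
  shows "lvol P F = lvol P G"
  unfolding lvol_def qsum2_def
  by (intro sum.cong refl arg_cong[where f = "\<lambda>t. side P ^ 2 / 4 * t"]) (rule assms; simp)

lemma favg_const [simp]: "favg P d (\<lambda>K x y. a) K s = a"
  by (simp add: favg_def trm_def trp_def split_beta)

lemma fjump_const [simp]: "fjump P d (\<lambda>K x y. a) K s = 0"
  by (simp add: fjump_def trm_def trp_def split_beta)

section \<open>Limiter and energy correction\<close>

lemma zs_gcell:
  assumes P: "valid_params P"
  shows "gcell P (pv P (zs P S U c) K) = gcell P (pv P (U c) K)"
proof -
  \<comment> \<open>\<open>tr\<close> and \<open>te\<close> are the factors \<open>\<theta>\<^sub>\<rho>\<close> and \<open>\<theta>\<^sub>e\<close>; their values do not matter.\<close>
  obtain tr te where zs_eq: "zs P S U c K =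
      (if inGeps P (\<lambda>c. avg P (U c) K)
       then (\<lambda>c p q. te * (if c = 0 then (\<lambda>p q. tr * U 0 K p q + (if p = 0 \<and> q = 0 then (1 - tr) * avg P (U 0) K else 0)) else U c K) p q
                    + (if p = 0 \<and> q = 0 then (1 - te) * avg P (U c) K else 0))
       else (\<lambda>c. U c K)) c"
    by (rule that) (unfold zs_def zs_cell_def Let_def, rule refl)
  define rho_hat where
    "rho_hat = (\<lambda>p q. tr * U 0 K p q + (if p = 0 \<and> q = 0 then (1 - tr) * avg P (U 0) K else 0))"
  have gcell_rho_hat: "gcell P (ev (kdeg P) rho_hat) = gcell P (pv P (U 0) K)"
    using avg_times_area[OF P, of "U 0" K]
    by (simp add: rho_hat_def gcell_add_const[OF P] pv_eq_ev algebra_simps)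
  show ?thesis
    unfolding pv_eq_ev zs_eq[folded rho_hat_def] using gcell_rho_hat avg_times_area[OF P, of "U c" K]
    by (cases "c = 0") (simp_all add: gcell_add_const[OF P] pv_eq_ev algebra_simps)
qed

lemma zs_gtotal: "valid_params P \<Longrightarrow> gtotal P (zs P S U c) = gtotal P (U c)"
  unfolding gtotal_def by (simp add: zs_gcell)

lemma energy_fix_gtotal:
  assumes P: "valid_params P" and corr: "energy_fix P U U'"
  shows "gtotal P (U' c) = gtotal P (U c)"
proof (cases "\<forall>K\<in>cells P. inGeps P (\<lambda>c. avg P (U c) K)")
  case True
  then show ?thesis using corr by (simp add: energy_fix_def)
next
  case False
  then obtain T Es where T: "T \<subseteq> cells P" and opt: "en_min P U T Es"
    and U': "U' = (\<lambda>c K. if c = 3 \<and> K \<in> T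
                 then (\<lambda>p q. U 3 K p q + (if p = 0 \<and> q = 0 then Es K - avg P (U 3) K else 0))
                 else U c K)"
    using corr unfolding energy_fix_def if_not_P[OF False] by blast
  have shift: "gcell P (pv P (U' c) K)
      = gcell P (pv P (U c) K) + (if c = 3 \<and> K \<in> T then (Es K - avg P (U 3) K) * side P ^ 2 else 0)" for K
    using gcell_add_const[OF P, of 1 "U 3 K" "Es K - avg P (U 3) K"] by (simp add: U' pv_eq_ev)
  have "(\<Sum>K\<in>T. Es K * side P ^ 2) = (\<Sum>K\<in>T. avg P (U 3) K * side P ^ 2)"
    using opt by (simp add: en_min_def en_feasible_def)
  then have "(\<Sum>K\<in>T. (Es K - avg P (U 3) K) * side P ^ 2) = 0"
    by (simp add: left_diff_distrib sum_subtractf)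
  then show ?thesis
    using T unfolding gtotal_def shift
    by (cases "c = 3") (simp_all add: sum.distrib sum.If_cases Int_absorb1[OF T])
qed

section \<open>The hyperbolic step\<close>

lemma pred_mod_Suc_mod:
  fixes i n :: nat
  assumes "i < n"
  shows "(Suc i mod n + n - Suc 0) mod n = i"
proof -
  have "Suc i mod n + n - Suc 0 = Suc i mod n + (n - 1)" using assms by simp
  then have "(Suc i mod n + n - Suc 0) mod n = (Suc i + (n - 1)) mod n" by (simp add: mod_add_left_eq)
  also have "Suc i + (n - 1) = i + n" using assms by simp
  finally show ?thesis using assms by simp
qed

lemma Suc_mod_pred_mod:
  fixes i n :: nat
  assumes "i < n"
  shows "Suc ((i + n - Suc 0) mod n) mod n = i"
proof -
  have "Suc ((i + n - Suc 0) mod n) mod n = Suc (i + n - Suc 0) mod n" by (simp add: mod_Suc_eq)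
  also have "Suc (i + n - Suc 0) = i + n" using assms by simp
  finally show ?thesis using assms by simp
qed

lemma nb_in_cells: "K \<in> cells P \<Longrightarrow> nb P d K \<in> cells P"
  by (auto simp: cells_def nb_def)

lemma nbm_in_cells: "K \<in> cells P \<Longrightarrow> nbm P d K \<in> cells P"
  by (auto simp: cells_def nbm_def)

lemma nbm_nb: "K \<in> cells P \<Longrightarrow> nbm P d (nb P d K) = K"
  by (auto simp: cells_def nb_def nbm_def pred_mod_Suc_mod Suc_mod_pred_mod)

lemma nb_nbm: "K \<in> cells P \<Longrightarrow> nb P d (nbm P d K) = K"
  by (auto simp: cells_def nb_def nbm_def pred_mod_Suc_mod Suc_mod_pred_mod)

lemma sum_cells_nb: "(\<Sum>K\<in>cells P. f (nb P d K)) = (\<Sum>K\<in>cells P. f K)"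
  by (rule sum.reindex_bij_witness[where j = "nb P d" and i = "nbm P d"])
     (auto simp: nb_in_cells nbm_in_cells nbm_nb nb_nbm)

lemma nflux_swap: "nflux P wp wm (- sg) d al c = - nflux P wm wp sg d al c"
  unfolding nflux_def by (simp add: field_simps)

lemma dg_rhs_gtotal:
  assumes rhs: "dg_rhs P U V" and c: "c < 4"
  shows "gtotal P (V c) = 0"
proof -
  define flux_out where "flux_out K d s =
    nflux P (case_prod (st P U K) (fpt d 1 s)) (case_prod (st P U (nb P d K)) (fpt d (-1) s))
      1 d (alpha P U d K) c" for K d s
  define flux_in where "flux_in K d s =
    nflux P (case_prod (st P U K) (fpt d (-1) s)) (case_prod (st P U (nbm P d K)) (fpt d 1 s))
      (-1) d (alpha P U d (nbm P d K)) c" for K d s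
  have cell: "gcell P (pv P (V c) K)
      = - (\<Sum>d<2. side P / 2 * qsum1 (gx P) (gw P) (\<lambda>s. flux_out K d s + flux_in K d s))"
    if "K \<in> cells P" for K
    using rhs[unfolded dg_rhs_def, rule_format, OF that c, of "const_poly 1"]
    by (simp add: flux_out_def flux_in_def prod.case_eq_if)
  have cancel: "(\<Sum>K\<in>cells P. flux_in K d s) = - (\<Sum>K\<in>cells P. flux_out K d s)" for d s
  proof -
    have "(\<Sum>K\<in>cells P. flux_in K d s) = (\<Sum>K\<in>cells P. flux_in (nb P d K) d s)"
      by (rule sum_cells_nb[symmetric])
    also have "\<dots> = (\<Sum>K\<in>cells P. - flux_out K d s)"
      by (rule sum.cong) (simp_all add: flux_in_def flux_out_def nbm_nb nflux_swap)
    finally show ?thesis by (simp add: sum_negf)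
  qed
  have "gtotal P (V c)
      = (\<Sum>K\<in>cells P. - (\<Sum>d<2. side P / 2 * qsum1 (gx P) (gw P) (\<lambda>s. flux_out K d s + flux_in K d s)))"
    unfolding gtotal_def by (rule sum.cong) (simp_all add: cell)
  also have "\<dots> = - (\<Sum>d<2. side P / 2 * (\<Sum>K\<in>cells P. qsum1 (gx P) (gw P) (\<lambda>s. flux_out K d s + flux_in K d s)))"
    by (simp only: sum_negf sum_distrib_left sum.swap[of _ "cells P"])
  also have "\<dots> = - (\<Sum>d<2. side P / 2 * qsum1 (gx P) (gw P)
                        (\<lambda>s. (\<Sum>K\<in>cells P. flux_out K d s) + (\<Sum>K\<in>cells P. flux_in K d s)))"
    by (simp add: qsum1_sum sum.distrib)
  also have "\<dots> = 0"
    by (simp add: cancel qsum1_def)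
  finally show ?thesis .
qed

lemma lc_gtotal: "gtotal P (lc a U b V c) = a * gtotal P (U c) + b * gtotal P (V c)"
proof -
  have "pv P (lc a U b V c) K = (\<lambda>x y. a * pv P (U c) K x y + b * pv P (V c) K x y)" for K
    by (simp add: pv_lc fun_eq_iff)
  then show ?thesis
    by (simp add: gtotal_def gcell_linear sum.distrib sum_distrib_left)
qed

lemma rk_step_gtotal:
  assumes P: "valid_params P" and step: "rk_step P \<tau> U U'" and c: "c < 4"
  shows "gtotal P (U' c) = gtotal P (U c)"
  using step dg_rhs_gtotal[OF _ c]
  by (auto simp: rk_step_def zs_gtotal[OF P] lc_gtotal)

lemma rk_chain_gtotal:
  "valid_params P \<Longrightarrow> rk_chain P ts U U' \<Longrightarrow> c < 4 \<Longrightarrow> gtotal P (U' c) = gtotal P (U c)"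
  by (induction ts arbitrary: U) (auto dest: rk_step_gtotal)

lemma hyp_step_gtotal:
  "valid_params P \<Longrightarrow> hyp_step P ts U U' \<Longrightarrow> c < 4 \<Longrightarrow> gtotal P (U' c) = gtotal P (U c)"
  unfolding hyp_step_def by (blast intro: rk_chain_gtotal)

section \<open>Gauss--Lobatto nodal identities\<close>

lemma poly_eq_sum_coeff:
  fixes L :: "real poly"
  assumes "degree L \<le> k"
  shows "poly L x = (\<Sum>i\<le>k. coeff L i * x ^ i)"
  unfolding poly_altdef
  by (rule sum.mono_neutral_left) (use assms in \<open>auto simp: coeff_eq_0\<close>)

lemma ev_coeff_tensor:
  fixes L1 L2 :: "real poly"
  assumes "degree L1 \<le> k" "degree L2 \<le> k"
  shows "ev k (\<lambda>p q. coeff L1 p * coeff L2 q) x y = poly L1 x * poly L2 y"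
  unfolding poly_eq_sum_coeff[OF assms(1)] poly_eq_sum_coeff[OF assms(2)] ev_def sum_product
  by (simp add: mult_ac)

lemma lagrange_basis_exists:
  fixes xs :: "real list"
  assumes "distinct xs" and "a < length xs"
  shows "\<exists>L. degree L < length xs \<and> (\<forall>b<length xs. poly L (xs ! b) = (if b = a then 1 else 0))"
proof -
  define S where "S = {..<length xs} - {a}"
  define L where "L = smult (1 / (\<Prod>b\<in>S. xs ! a - xs ! b)) (\<Prod>b\<in>S. [:- (xs ! b), 1:])"
  have "degree L \<le> card S"
    unfolding L_def using degree_prod_sum_le[of S "\<lambda>b. [:- (xs ! b), 1:]"]
    by (simp add: S_def degree_smult_le order_trans)
  also have "card S < length xs"
    using assms(2) by (simp add: S_def)
  finally have "degree L < length xs" .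
  moreover have "(\<Prod>b\<in>S. xs ! a - xs ! b) \<noteq> 0"
    using assms by (auto simp: S_def nth_eq_iff_index_eq)
  then have "poly L (xs ! b) = (if b = a then 1 else 0)" if "b < length xs" for b
    using that by (auto simp: L_def S_def poly_prod intro!: prod_zero)
  ultimately show ?thesis by blast
qed

lemma lobatto_nodes: "valid_params P \<Longrightarrow> distinct (lx P) \<and> length (lx P) = kdeg P + 1"
  unfolding valid_params_def gauss_lobatto_rule_def quad_nodes_def strict_sorted_iff by auto

lemma lobatto_nodal_basis:
  assumes P: "valid_params P" and a: "a < length (lx P)" and b: "b < length (lx P)"
  obtains c where "\<And>i j. i < length (lx P) \<Longrightarrow> j < length (lx P) \<Longrightarrow>
    ev (kdeg P) c (lx P ! i) (lx P ! j) = (if i = a \<and> j = b then 1 else 0)"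
proof -
  have nodes: "distinct (lx P)" "length (lx P) = kdeg P + 1"
    using lobatto_nodes[OF P] by auto
  obtain La where La: "degree La < length (lx P)"
    "\<And>i. i < length (lx P) \<Longrightarrow> poly La (lx P ! i) = (if i = a then 1 else 0)"
    using lagrange_basis_exists[OF nodes(1) a] by blast
  obtain Lb where Lb: "degree Lb < length (lx P)"
    "\<And>j. j < length (lx P) \<Longrightarrow> poly Lb (lx P ! j) = (if j = b then 1 else 0)"
    using lagrange_basis_exists[OF nodes(1) b] by blast
  show ?thesis
    using La Lb nodes by (intro that[of "\<lambda>p q. coeff La p * coeff Lb q"]) (simp add: ev_coeff_tensor)
qed

text \<open>The Gauss--Lobatto mass matrix is diagonal, so testing with the nodal basis function of a
  single node on a single cell isolates the value at that node.\<close>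

lemma lvol_orthogonal_nodal:
  assumes P: "valid_params P"
    and orth: "\<And>\<psi>. lvol P (\<lambda>K x y. g K x y * pv P \<psi> K x y) = 0"
    and K: "K \<in> cells P" and a: "a < length (lx P)" and b: "b < length (lx P)"
  shows "lw P ! a * lw P ! b * g K (lx P ! a) (lx P ! b) = 0"
proof -
  obtain c where c: "\<And>i j. i < length (lx P) \<Longrightarrow> j < length (lx P) \<Longrightarrow>
      ev (kdeg P) c (lx P ! i) (lx P ! j) = (if i = a \<and> j = b then 1 else 0)"
    using lobatto_nodal_basis[OF P a b] by blast
  define \<psi> where "\<psi> = (\<lambda>K'. if K' = K then c else const_poly 0)"
  have "qsum2 (lx P) (lw P) (\<lambda>x y. g K x y * ev (kdeg P) c x y) = lw P ! a * lw P ! b * g K (lx P ! a) (lx P ! b)"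
    using a b by (simp add: qsum2_def c if_distrib[of "\<lambda>z. _ * z"] sum_sum_delta cong: if_cong)
  moreover have "lvol P (\<lambda>K x y. g K x y * pv P \<psi> K x y)
      = (\<Sum>K'\<in>cells P. if K' = K then side P ^ 2 / 4 * qsum2 (lx P) (lw P) (\<lambda>x y. g K x y * ev (kdeg P) c x y) else 0)"
    unfolding lvol_def by (rule sum.cong) (simp_all add: \<psi>_def pv_def qsum2_def)
  moreover have "\<dots> = side P ^ 2 / 4 * qsum2 (lx P) (lw P) (\<lambda>x y. g K x y * ev (kdeg P) c x y)"
    using K by simp
  ultimately show ?thesis
    using orth[of \<psi>] side_pos[OF P] by simp
qed

section \<open>The parabolic step\<close>

definition single_vfun :: "nat \<Rightarrow> sfun \<Rightarrow> vfun" where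
  "single_vfun i \<psi> = (\<lambda>i'. if i' = i then \<psi> else const_sfun 0)"

lemma sum2_single_vfun:
  "i < 2 \<Longrightarrow> (\<Sum>i'<2. F i' * pv P (single_vfun i \<psi> i') K x y) = F i * pv P \<psi> K x y"
  by (auto simp: single_vfun_def numeral_2_eq_2 less_Suc_eq)

lemma pv_single_const [simp]:
  "pv P (single_vfun i (const_sfun a) i') = (\<lambda>K x y. if i' = i then a else 0)"
  by (simp add: single_vfun_def)

lemma pd_single_const [simp]: "pd P d (single_vfun i (const_sfun a) i') = (\<lambda>K x y. 0)"
  by (simp add: single_vfun_def)

lemma a_eps_const_test: "a_eps P u (single_vfun i (const_sfun a)) = 0"
  by (simp add: a_eps_def strain_def)

lemma a_lam_const_test: "a_lam P u (single_vfun i (const_sfun a)) = 0"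
  by (simp add: a_lam_def divg_def)

lemma a_D_const_test: "a_D P e (const_sfun a) = 0"
  by (simp add: a_D_def)

lemma a_eps_self: "a_eps P u u = b_eps P u (const_sfun 1)"
  by (simp add: a_eps_def b_eps_def)

lemma a_lam_self: "a_lam P u u = b_lam P u (const_sfun 1)"
  by (simp add: a_lam_def b_lam_def power2_eq_square)

lemma recover_momentum_test:
  assumes rec: "recover P U u e" and i: "i < 2"
  shows "lvol P (\<lambda>K x y. pv P (U (Suc i)) K x y * pv P \<psi> K x y)
       = lvol P (\<lambda>K x y. pv P (U 0) K x y * pv P (u i) K x y * pv P \<psi> K x y)"
proof -
  have "lvol P (\<lambda>K x y. \<Sum>i'<2. pv P (U (Suc i')) K x y * pv P (single_vfun i \<psi> i') K x y)
      = lvol P (\<lambda>K x y. \<Sum>i'<2. pv P (U 0) K x y * pv P (u i') K x y * pv P (single_vfun i \<psi> i') K x y)"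
    using rec unfolding recover_def by blast
  then show ?thesis by (simp only: sum2_single_vfun[OF i])
qed

lemma recover_momentum_lvol:
  assumes "recover P U u e" and "i < 2"
  shows "lvol P (pv P (U (Suc i))) = lvol P (\<lambda>K x y. pv P (U 0) K x y * pv P (u i) K x y)"
  using recover_momentum_test[OF assms, of "const_sfun 1"] by simp

lemma recover_momentum_nodal:
  assumes P: "valid_params P" and rec: "recover P U u e" and i: "i < 2"
    and K: "K \<in> cells P" and a: "a < length (lx P)" and b: "b < length (lx P)"
  shows "lw P ! a * lw P ! b * (pv P (U (Suc i)) K (lx P ! a) (lx P ! b)
           - pv P (U 0) K (lx P ! a) (lx P ! b) * pv P (u i) K (lx P ! a) (lx P ! b)) = 0"
proof (rule lvol_orthogonal_nodal[OF P _ K a b])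
  fix \<psi>
  show "lvol P (\<lambda>K x y. (pv P (U (Suc i)) K x y - pv P (U 0) K x y * pv P (u i) K x y) * pv P \<psi> K x y) = 0"
    using recover_momentum_test[OF rec i, of \<psi>] by (simp add: left_diff_distrib lvol_diff)
qed

definition rho_inner :: "prm \<Rightarrow> sfun \<Rightarrow> vfun \<Rightarrow> vfun \<Rightarrow> cell \<Rightarrow> real \<Rightarrow> real \<Rightarrow> real" where
  "rho_inner P rho u v K x y = (\<Sum>i<2. pv P rho K x y * pv P (u i) K x y * pv P (v i) K x y)"

lemma recover_kinetic_lvol:
  assumes P: "valid_params P" and rec: "recover P U u e"
    and pos: "\<forall>K\<in>cells P. \<forall>(\<xi>, \<eta>)\<in>GL_pts P. pv P (U 0) K \<xi> \<eta> > 0"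
  shows "lvol P (\<lambda>K x y. \<Sum>i<2. pv P (U (Suc i)) K x y / (2 * pv P (U 0) K x y) * pv P (U (Suc i)) K x y)
       = lvol P (\<lambda>K x y. 1 / 2 * rho_inner P (U 0) u u K x y)"
proof (rule lvol_cong_nodes)
  fix K a b assume K: "K \<in> cells P" and a: "a < length (lx P)" and b: "b < length (lx P)"
  define w where "w = lw P ! a * lw P ! b"
  define r where "r = pv P (U 0) K (lx P ! a) (lx P ! b)"
  define m where "m i = pv P (U (Suc i)) K (lx P ! a) (lx P ! b)" for i
  define v where "v i = pv P (u i) K (lx P ! a) (lx P ! b)" for i
  have "r > 0" using pos K a b by (auto simp: r_def GL_pts_def)
  moreover have "w * (m i - r * v i) = 0" if "i < 2" for i
    using recover_momentum_nodal[OF P rec that K a b] by (simp add: w_def m_def r_def v_def)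
  ultimately have pointwise: "w * (m i / (2 * r) * m i) = w * (1 / 2 * (r * v i * v i))" if "i < 2" for i
    using that by (cases "w = 0") (auto simp: field_simps)
  have "w * (\<Sum>i<2. m i / (2 * r) * m i) = (\<Sum>i<2. w * (m i / (2 * r) * m i))"
    by (simp add: sum_distrib_left)
  also have "\<dots> = (\<Sum>i<2. w * (1 / 2 * (r * v i * v i)))"
    using pointwise by (intro sum.cong) auto
  finally show "w * (\<Sum>i<2. m i / (2 * r) * m i) = w * (1 / 2 * rho_inner P (U 0) u u K (lx P ! a) (lx P ! b))"
    by (simp add: rho_inner_def sum_distrib_left r_def v_def)
qed

lemma recover_energy_lvol:
  assumes P: "valid_params P" and rec: "recover P U u e"
    and pos: "\<forall>K\<in>cells P. \<forall>(\<xi>, \<eta>)\<in>GL_pts P. pv P (U 0) K \<xi> \<eta> > 0"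
  shows "lvol P (pv P (U 3))
       = lvol P (\<lambda>K x y. pv P (U 0) K x y * pv P e K x y) + lvol P (rho_inner P (U 0) u u) / 2"
proof -
  have "lvol P (pv P (U 3)) = lvol P (\<lambda>K x y. pv P (U 0) K x y * pv P e K x y)
      + lvol P (\<lambda>K x y. \<Sum>i<2. pv P (U (Suc i)) K x y / (2 * pv P (U 0) K x y) * pv P (U (Suc i)) K x y)"
    using rec[unfolded recover_def, THEN conjunct2, rule_format, of "const_sfun 1"] by simp
  then show ?thesis unfolding recover_kinetic_lvol[OF P rec pos] lvol_scale by simp
qed

lemma visc_mom_lvol:
  assumes mom: "visc_mom P rho uH ust" and i: "i < 2"
  shows "lvol P (\<lambda>K x y. pv P rho K x y * pv P (ust i) K x y) = lvol P (\<lambda>K x y. pv P rho K x y * pv P (uH i) K x y)"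
proof -
  have "lvol P (\<lambda>K x y. \<Sum>i'<2. pv P rho K x y * pv P (ust i') K x y * pv P (single_vfun i (const_sfun 1) i') K x y)
      + dt P / (2 * Rey P) * a_eps P ust (single_vfun i (const_sfun 1))
      + dt P / (3 * Rey P) * a_lam P ust (single_vfun i (const_sfun 1))
      = lvol P (\<lambda>K x y. \<Sum>i'<2. pv P rho K x y * pv P (uH i') K x y * pv P (single_vfun i (const_sfun 1) i') K x y)"
    using mom unfolding visc_mom_def by blast
  then show ?thesis
    by (simp only: sum2_single_vfun[OF i] a_eps_const_test a_lam_const_test) simp
qed

lemma visc_mom_work:
  assumes "visc_mom P rho uH ust"
  shows "lvol P (rho_inner P rho ust ust) + dt P / (2 * Rey P) * b_eps P ust (const_sfun 1)
       + dt P / (3 * Rey P) * b_lam P ust (const_sfun 1) = lvol P (rho_inner P rho uH ust)"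
  using assms[unfolded visc_mom_def, rule_format, of ust] unfolding rho_inner_def a_eps_self a_lam_self .

lemma visc_en_lvol:
  assumes "visc_en P rho eH ust est"
  shows "lvol P (\<lambda>K x y. pv P rho K x y * pv P est K x y)
       = lvol P (\<lambda>K x y. pv P rho K x y * pv P eH K x y)
       + vth P * dt P / Rey P * b_eps P ust (const_sfun 1) + 2 * vth P * dt P / (3 * Rey P) * b_lam P ust (const_sfun 1)"
  using assms[unfolded visc_en_def, rule_format, of "const_sfun 1"] by (simp add: a_D_const_test)

lemma parabolic_momentum_lvol:
  assumes recH: "recover P UH uH eH" and mom: "visc_mom P (UH 0) uH ust"
    and rho: "UP 0 = UH 0" and recP: "recover P UP (lc 2 ust (-1) uH) eP" and i: "i < 2"
  shows "lvol P (pv P (UP (Suc i))) = lvol P (pv P (UH (Suc i)))"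
proof -
  have "lvol P (pv P (UP (Suc i)))
      = lvol P (\<lambda>K x y. 2 * (pv P (UH 0) K x y * pv P (ust i) K x y) + (-1) * (pv P (UH 0) K x y * pv P (uH i) K x y))"
    using recover_momentum_lvol[OF recP i] rho by (simp add: pv_lc algebra_simps)
  also have "\<dots> = lvol P (\<lambda>K x y. pv P (UH 0) K x y * pv P (uH i) K x y)"
    by (simp only: lvol_linear visc_mom_lvol[OF mom i])
  also have "\<dots> = lvol P (pv P (UH (Suc i)))"
    using recover_momentum_lvol[OF recH i] by simp
  finally show ?thesis .
qed

definition viscous_heat :: "prm \<Rightarrow> vfun \<Rightarrow> real" where
  "viscous_heat P u = dt P / Rey P * b_eps P u (const_sfun 1) + 2 * dt P / (3 * Rey P) * b_lam P u (const_sfun 1)"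

lemma internal_energy_gain:
  assumes P: "valid_params P" and en: "visc_en P rho eH ust est"
  shows "lvol P (\<lambda>K x y. pv P rho K x y * pv P (lcs (1 / vth P) est (1 - 1 / vth P) eH) K x y)
       = lvol P (\<lambda>K x y. pv P rho K x y * pv P eH K x y) + viscous_heat P ust"
proof -
  have "vth P \<noteq> 0" "Rey P \<noteq> 0"
    using P by (auto simp: valid_params_def)
  have "lvol P (\<lambda>K x y. pv P rho K x y * pv P (lcs (1 / vth P) est (1 - 1 / vth P) eH) K x y)
      = 1 / vth P * lvol P (\<lambda>K x y. pv P rho K x y * pv P est K x y)
      + (1 - 1 / vth P) * lvol P (\<lambda>K x y. pv P rho K x y * pv P eH K x y)"
    unfolding pv_lcs lvol_linear[symmetric] by (simp add: algebra_simps)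
  also have "\<dots> = lvol P (\<lambda>K x y. pv P rho K x y * pv P eH K x y) + viscous_heat P ust"
    using \<open>vth P \<noteq> 0\<close> \<open>Rey P \<noteq> 0\<close> unfolding visc_en_lvol[OF en] viscous_heat_def
    by (simp add: field_simps)
  finally show ?thesis .
qed

lemma kinetic_energy_loss:
  assumes P: "valid_params P" and mom: "visc_mom P rho uH ust"
  defines "uP \<equiv> lc 2 ust (-1) uH"
  shows "lvol P (rho_inner P rho uP uP) = lvol P (rho_inner P rho uH uH) - 2 * viscous_heat P ust"
proof -
  have "rho_inner P rho uP uP = (\<lambda>K x y. rho_inner P rho uH uH K x y
      + 4 * (rho_inner P rho ust ust K x y - rho_inner P rho uH ust K x y))"
    by (simp add: fun_eq_iff uP_def rho_inner_def pv_lc numeral_2_eq_2 algebra_simps)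
  then have expand: "lvol P (rho_inner P rho uP uP) = lvol P (rho_inner P rho uH uH)
      + 4 * (lvol P (rho_inner P rho ust ust) - lvol P (rho_inner P rho uH ust))"
    by (simp only: lvol_add lvol_scale lvol_diff)
  define work_eps work_lam where
    "work_eps = dt P / (2 * Rey P) * b_eps P ust (const_sfun 1)" and
    "work_lam = dt P / (3 * Rey P) * b_lam P ust (const_sfun 1)"
  have "Rey P \<noteq> 0"
    using P by (auto simp: valid_params_def)
  then have "4 * (work_eps + work_lam) = 2 * viscous_heat P ust"
    by (simp add: work_eps_def work_lam_def viscous_heat_def field_simps)
  then show ?thesis
    using expand visc_mom_work[OF mom, folded work_eps_def work_lam_def] by argo
qed

lemma parabolic_energy_lvol:
  assumes P: "valid_params P"
    and pos: "\<forall>K\<in>cells P. \<forall>(\<xi>, \<eta>)\<in>GL_pts P. pv P (UH 0) K \<xi> \<eta> > 0"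
    and recH: "recover P UH uH eH" and mom: "visc_mom P (UH 0) uH ust"
    and en: "visc_en P (UH 0) eH ust est" and rho: "UP 0 = UH 0"
    and recP: "recover P UP (lc 2 ust (-1) uH) (lcs (1 / vth P) est (1 - 1 / vth P) eH)"
  shows "lvol P (pv P (UP 3)) = lvol P (pv P (UH 3))"
proof -
  have "lvol P (pv P (UP 3))
      = lvol P (\<lambda>K x y. pv P (UH 0) K x y * pv P (lcs (1 / vth P) est (1 - 1 / vth P) eH) K x y)
      + lvol P (rho_inner P (UH 0) (lc 2 ust (-1) uH) (lc 2 ust (-1) uH)) / 2"
    using recover_energy_lvol[OF P recP] pos rho by simp
  also have "\<dots> = lvol P (\<lambda>K x y. pv P (UH 0) K x y * pv P eH K x y) + lvol P (rho_inner P (UH 0) uH uH) / 2"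
    unfolding internal_energy_gain[OF P en] kinetic_energy_loss[OF P mom] by (simp add: field_simps)
  also have "\<dots> = lvol P (pv P (UH 3))"
    using recover_energy_lvol[OF P recH pos] by simp
  finally show ?thesis .
qed

definition parabolic_step :: "prm \<Rightarrow> vfun \<Rightarrow> vfun \<Rightarrow> bool" where
  "parabolic_step P UH UP \<longleftrightarrow> (\<exists>uH eH ust est.
     recover P UH uH eH \<and> visc_mom P (UH 0) uH ust \<and> visc_en P (UH 0) eH ust est \<and>
     UP 0 = UH 0 \<and> recover P UP (lc 2 ust (-1) uH) (lcs (1 / vth P) est (1 - 1 / vth P) eH))"

lemma parabolic_step_gtotal:
  assumes P: "valid_params P" and step: "parabolic_step P UH UP"
    and pos: "\<forall>K\<in>cells P. \<forall>(\<xi>, \<eta>)\<in>GL_pts P. pv P (UH 0) K \<xi> \<eta> > 0"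
    and c: "c < 4"
  shows "gtotal P (UP c) = gtotal P (UH c)"
proof -
  obtain uH eH ust est where recH: "recover P UH uH eH" and mom: "visc_mom P (UH 0) uH ust"
    and en: "visc_en P (UH 0) eH ust est" and rho: "UP 0 = UH 0"
    and recP: "recover P UP (lc 2 ust (-1) uH) (lcs (1 / vth P) est (1 - 1 / vth P) eH)"
    using step unfolding parabolic_step_def by blast
  consider "c = 0" | i where "i < 2" "c = Suc i" | "c = 3"
  proof (cases c)
    case (Suc i)
    then show ?thesis using c that(2,3) by (cases "i < 2") (auto simp: numeral_3_eq_3)
  qed (use that(1) in blast)
  then have "lvol P (pv P (UP c)) = lvol P (pv P (UH c))"
  proof cases
    case 1
    then show ?thesis using rho by simp
  next
    case (2 i)
    then show ?thesis using parabolic_momentum_lvol[OF recH mom rho recP] by simp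
  next
    case 3
    then show ?thesis using parabolic_energy_lvol[OF P pos recH mom en rho recP] by simp
  qed
  then show ?thesis by (simp add: gtotal_eq_lvol[OF P])
qed

theorem theorem1:
  fixes P :: prm and taus1 taus2 :: "real list"
    and Uold UH UHl U4 U4f UP Unew uH ust uP :: vfun
    and eH est eP :: sfun
  assumes params: "valid_params P"
    and step_H1: "hyp_step P taus1 Uold UH"
    and lim_GL: "UHl = zs P (GL_pts P) UH"
    and rho_pos: "\<forall>K\<in>cells P. \<forall>(\<xi>, \<eta>)\<in>GL_pts P. pv P (UHl 0) K \<xi> \<eta> > 0"
    and recover_H: "recover P UHl uH eH"
    and momentum: "visc_mom P (UHl 0) uH ust"
    and uP_def: "uP = lc 2 ust (-1) uH"
    and energy: "visc_en P (UHl 0) eH ust est"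
    and eP_def: "eP = lcs (1 / vth P) est (1 - 1 / vth P) eH"
    and rhoP: "U4 0 = UHl 0"
    and recover_P: "recover P U4 uP eP"
    and fix_energy: "energy_fix P U4 U4f"
    and lim_S: "UP = zs P (S_pts P) U4f"
    and admissible: "\<forall>K\<in>cells P. \<forall>(\<xi>, \<eta>)\<in>S_pts P. inG (st P UP K \<xi> \<eta>)"
    and step_H2: "hyp_step P taus2 UP Unew"
  shows "gtotal P (Uold 0) = gtotal P (Unew 0)
       \<and> (gtotal P (Uold 1), gtotal P (Uold 2)) = (gtotal P (Unew 1), gtotal P (Unew 2))
       \<and> gtotal P (Uold 3) = gtotal P (Unew 3)"
proof -
  have parabolic: "parabolic_step P UHl U4"
    unfolding parabolic_step_def using recover_H momentum energy rhoP recover_P uP_def eP_def by blast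
  have "gtotal P (Unew c) = gtotal P (Uold c)" if c: "c < 4" for c
  proof -
    have "gtotal P (Unew c) = gtotal P (UP c)"
      by (rule hyp_step_gtotal[OF params step_H2 c])
    also have "\<dots> = gtotal P (U4 c)"
      unfolding lim_S zs_gtotal[OF params] by (rule energy_fix_gtotal[OF params fix_energy])
    also have "\<dots> = gtotal P (UHl c)"
      by (rule parabolic_step_gtotal[OF params parabolic rho_pos c])
    also have "\<dots> = gtotal P (Uold c)"
      unfolding lim_GL zs_gtotal[OF params] by (rule hyp_step_gtotal[OF params step_H1 c])
    finally show ?thesis .
  qed
  then show ?thesis by simp
qed

end
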